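(* Let $x\in\mathbb{R}\setminus\{0\}$ and let $n,r$ be positive integers. Then \begin{enumerate} \item $\displaystyle\sum_{i=0}^{n}\frac{r}{r+i}(-1)^i\binom{n}{i}x^{r+i}=-\left(\sum_{i=1}^{r}x^{r-i}(1-x)^{n+i}\frac{P_i^{r}}{P_i^{n+i}}\right)+\frac{1}{\binom{n+r}{r}}$; \item $\displaystyle\sum_{i=0}^{n}\frac{r}{r+i}\binom{n}{i}x^{r+i}=\left(\sum_{i=1}^{r}(-1)^{i-1}x^{r-i}(1+x)^{n+i}\frac{P_i^{r}}{P_i^{n+i}}\right)+\frac{(-1)^r}{\binom{n+r}{r}}$. \end{enumerate}
   Context: For nonnegative integers $m$ and $i$, $P_i^{m}=m(m-1)\cdots(m-i+1)=\frac{m!}{(m-i)!}$ denotes the number of $i$-permutations of $m$ objects (falling factorial; $P_i^m=0$ if $i>m$). *)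

theory Defs
  imports Complex_Main
begin

definition perm_count :: "nat \<Rightarrow> nat \<Rightarrow> nat" where
  "perm_count i m = (if i \<le> m then fact m div fact (m - i) else 0)"

end

(* The left-hand side of the first identity is r * integral_0^x t^(r-1) (1 - t)^n dt, and its
   right-hand side is what r-fold integration by parts produces. Instead of integrating we compare
   derivatives in x. The coefficients rho_i = P_i^r / P_i^(n+i) satisfy
   rho_i (n + i) = rho_(i-1) (r - i + 1), which makes the derivative of the i-th tail term a
   difference u(i) - u(i - 1); so the derivative of the tail sum telescopes to
   -r x^(r-1) (1 - x)^n. Hence both sides differ by a constant, which is 0 at x = 0. The second
   identity is the first one at -x. *)

theory Submission
  imports Defs
begin

lemma real_perm_count: "i \<le> m \<Longrightarrow> real (perm_count i m) = fact m / fact (m - i)"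
  unfolding perm_count_def by (simp add: real_of_nat_div fact_dvd)

definition perm_ratio :: "nat \<Rightarrow> nat \<Rightarrow> nat \<Rightarrow> real" where
  "perm_ratio n r i = fact r * fact n / (fact (r - i) * fact (n + i))"

lemma perm_count_quotient_eq_perm_ratio:
  "i \<le> r \<Longrightarrow> real (perm_count i r) / real (perm_count i (n + i)) = perm_ratio n r i"
  by (simp add: real_perm_count perm_ratio_def field_simps)

lemma perm_ratio_0 [simp]: "perm_ratio n r 0 = 1"
  by (simp add: perm_ratio_def)

lemma perm_ratio_self: "perm_ratio n r r = 1 / real ((n + r) choose r)"
  by (simp add: perm_ratio_def binomial_fact field_simps)

lemma perm_ratio_Suc:
  assumes "j < r"
  shows "perm_ratio n r (Suc j) * real (n + Suc j) = perm_ratio n r j * real (r - j)"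
proof -
  define c :: real where "c = fact r * fact n / (fact (r - Suc j) * fact (n + j))"
  have fact_split: "fact (r - j) = (real (r - j) * fact (r - Suc j) :: real)"
    using assms by (metis Suc_diff_Suc fact_Suc)
  have "perm_ratio n r j * real (r - j) = c"
    unfolding perm_ratio_def c_def fact_split using assms by simp
  moreover have "perm_ratio n r (Suc j) * real (n + Suc j) = c"
    unfolding perm_ratio_def c_def by (simp del: of_nat_add of_nat_Suc)
  ultimately show ?thesis by simp
qed

lemma has_real_derivative_beta_sum:
  fixes y :: real
  assumes "r > 0"
  shows "((\<lambda>y. \<Sum>i=0..n. (real r / real (r + i)) * (-1) ^ i * real (n choose i) * y ^ (r + i))
          has_real_derivative real r * y ^ (r - 1) * (1 - y) ^ n) (at y)"
proof -
  have "((\<lambda>y. \<Sum>i=0..n. (real r / real (r + i)) * (-1) ^ i * real (n choose i) * y ^ (r + i))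
          has_real_derivative
          (\<Sum>i=0..n. (real r / real (r + i)) * (-1) ^ i * real (n choose i) * (real (r + i) * y ^ (r + i - 1))))
        (at y)"
    by (intro DERIV_sum derivative_eq_intros) auto
  also have "(\<Sum>i=0..n. (real r / real (r + i)) * (-1) ^ i * real (n choose i) * (real (r + i) * y ^ (r + i - 1)))
      = real r * y ^ (r - 1) * (\<Sum>i\<le>n. real (n choose i) * (- y) ^ i)"
    unfolding sum_distrib_left atLeast0AtMost
  proof (rule sum.cong[OF refl])
    fix i
    have "y ^ (r + i - 1) = y ^ (r - 1) * y ^ i"
      using assms by (simp add: power_add[symmetric])
    moreover have "real r / real (r + i) * real (r + i) = real r"
      using assms by simp
    ultimately show "(real r / real (r + i)) * (-1) ^ i * real (n choose i) * (real (r + i) * y ^ (r + i - 1))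
        = real r * y ^ (r - 1) * (real (n choose i) * (- y) ^ i)"
      by (simp add: power_minus[of y])
  qed
  also have "\<dots> = real r * y ^ (r - 1) * (1 - y) ^ n"
    using binomial_ring[of "- y" 1 n] by simp
  finally show ?thesis .
qed

lemma has_real_derivative_tail_sum:
  fixes y :: real
  assumes "r > 0"
  shows "((\<lambda>y. \<Sum>i=1..r. y ^ (r - i) * (1 - y) ^ (n + i) * perm_ratio n r i)
          has_real_derivative - (real r * y ^ (r - 1) * (1 - y) ^ n)) (at y)"
proof -
  define u where "u j = perm_ratio n r j * real (r - j) * y ^ (r - Suc j) * (1 - y) ^ (n + j)" for j
  have "((\<lambda>y. y ^ (r - Suc j) * (1 - y) ^ (n + Suc j) * perm_ratio n r (Suc j))
         has_real_derivative u (Suc j) - u j) (at y)" if "j < r" for j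
  proof -
    have "((\<lambda>y. y ^ (r - Suc j) * (1 - y) ^ (n + Suc j) * perm_ratio n r (Suc j))
         has_real_derivative
         u (Suc j) - perm_ratio n r (Suc j) * real (n + Suc j) * y ^ (r - Suc j) * (1 - y) ^ (n + j)) (at y)"
      unfolding u_def by (rule derivative_eq_intros refl | simp add: algebra_simps)+
    also have "perm_ratio n r (Suc j) * real (n + Suc j) = perm_ratio n r j * real (r - j)"
      using that by (rule perm_ratio_Suc)
    finally show ?thesis
      unfolding u_def by simp
  qed
  then have "((\<lambda>y. \<Sum>j<r. y ^ (r - Suc j) * (1 - y) ^ (n + Suc j) * perm_ratio n r (Suc j))
         has_real_derivative (\<Sum>j<r. u (Suc j) - u j)) (at y)"
    by (intro DERIV_sum) simp
  also have "(\<Sum>j<r. u (Suc j) - u j) = - (real r * y ^ (r - 1) * (1 - y) ^ n)"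
    unfolding sum_lessThan_telescope by (simp add: u_def)
  finally show ?thesis
    by (simp only: One_nat_def sum.atLeast1_atMost_eq)
qed

lemma beta_sum_expansion:
  fixes x :: real
  assumes "r > 0"
  shows "(\<Sum>i=0..n. (real r / real (r + i)) * (-1) ^ i * real (n choose i) * x ^ (r + i))
    = - (\<Sum>i=1..r. x ^ (r - i) * (1 - x) ^ (n + i) * perm_ratio n r i) + 1 / real ((n + r) choose r)"
proof -
  define F where "F y = (\<Sum>i=0..n. (real r / real (r + i)) * (-1) ^ i * real (n choose i) * y ^ (r + i))
    + (\<Sum>i=1..r. y ^ (r - i) * (1 - y) ^ (n + i) * perm_ratio n r i)" for y :: real
  have "DERIV F y :> 0" for y
    unfolding F_def[abs_def]
    using DERIV_add[OF has_real_derivative_beta_sum[OF assms, where n = n and y = y]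
        has_real_derivative_tail_sum[OF assms, where n = n and y = y]]
    by simp
  then have "F x = F 0"
    by (intro DERIV_isconst_all) auto
  also have "F 0 = (\<Sum>i=1..r. 0 ^ (r - i) * perm_ratio n r i)"
    unfolding F_def using assms by (simp add: zero_power)
  also have "\<dots> = (\<Sum>i=1..r. if i = r then perm_ratio n r r else 0)"
    by (rule sum.cong[OF refl]) (auto simp: power_0_left)
  also have "\<dots> = perm_ratio n r r"
    using assms by simp
  finally show ?thesis
    unfolding F_def perm_ratio_self by simp
qed

lemma beta_sum_expansion_reflected:
  fixes x :: real
  assumes "r > 0"
  shows "(\<Sum>i=0..n. (real r / real (r + i)) * real (n choose i) * x ^ (r + i))
    = (\<Sum>i=1..r. (-1) ^ (i - 1) * x ^ (r - i) * (1 + x) ^ (n + i) * perm_ratio n r i)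
      + (-1) ^ r / real ((n + r) choose r)"
proof -
  have "(\<Sum>i=0..n. (real r / real (r + i)) * (-1) ^ i * real (n choose i) * (- x) ^ (r + i))
      = (-1) ^ r * (\<Sum>i=0..n. (real r / real (r + i)) * real (n choose i) * x ^ (r + i))"
      (is "_ = _ * ?L")
    unfolding sum_distrib_left
    by (rule sum.cong[OF refl]) (simp add: power_minus[of x] power_add)
  moreover have "- (\<Sum>i=1..r. (- x) ^ (r - i) * (1 - - x) ^ (n + i) * perm_ratio n r i)
      = (-1) ^ r * (\<Sum>i=1..r. (-1) ^ (i - 1) * x ^ (r - i) * (1 + x) ^ (n + i) * perm_ratio n r i)"
      (is "_ = _ * ?T")
    unfolding sum_distrib_left sum_negf[symmetric]
  proof (rule sum.cong[OF refl])
    fix i assume "i \<in> {1..r}"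
    then have "r = Suc ((r - i) + (i - 1))"
      by simp
    then have "(-1 :: real) ^ r = - ((-1) ^ (r - i) * (-1) ^ (i - 1))"
      by (metis power_Suc power_add mult_minus1)
    then show "- ((- x) ^ (r - i) * (1 - - x) ^ (n + i) * perm_ratio n r i)
        = (-1) ^ r * ((-1) ^ (i - 1) * x ^ (r - i) * (1 + x) ^ (n + i) * perm_ratio n r i)"
      by (simp add: power_minus[of x])
  qed
  ultimately have "(-1) ^ r * ?L = (-1) ^ r * ?T + 1 / real ((n + r) choose r)"
    using beta_sum_expansion[OF assms, of n "- x"] by simp
  then have "(-1) ^ r * ((-1) ^ r * ?L) = (-1) ^ r * ((-1) ^ r * ?T + 1 / real ((n + r) choose r))"
    by simp
  then show ?thesis
    by (simp add: distrib_left)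
qed

theorem mainTheorem7:
  fixes x :: real and n r :: nat
  assumes "x \<noteq> 0" and "n > 0" and "r > 0"
  shows "((\<Sum>i=0..n. (real r / real (r + i)) * (-1) ^ i * real (n choose i) * x ^ (r + i))
           = - (\<Sum>i=1..r. x ^ (r - i) * (1 - x) ^ (n + i) *
                  (real (perm_count i r) / real (perm_count i (n + i))))
             + 1 / real ((n + r) choose r)) \<and>
         ((\<Sum>i=0..n. (real r / real (r + i)) * real (n choose i) * x ^ (r + i))
           = (\<Sum>i=1..r. (-1) ^ (i - 1) * x ^ (r - i) * (1 + x) ^ (n + i) *
                  (real (perm_count i r) / real (perm_count i (n + i))))
             + (-1) ^ r / real ((n + r) choose r))"
proof -
  have ratio: "(\<Sum>i=1..r. f i * (real (perm_count i r) / real (perm_count i (n + i))))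
      = (\<Sum>i=1..r. f i * perm_ratio n r i)" for f :: "nat \<Rightarrow> real"
    by (rule sum.cong[OF refl]) (simp add: perm_count_quotient_eq_perm_ratio)
  show ?thesis
    unfolding ratio
    using beta_sum_expansion[OF \<open>r > 0\<close>] beta_sum_expansion_reflected[OF \<open>r > 0\<close>]
    by blast
qed

end
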